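(* Consider a sequence of finite populations whose size $N\to\infty$, each equipped with its own randomized design, exposure mapping and fixed potential outcomes as in the context, and fix two exposures $d_k,d_l$. Assume: (Condition 1) there is a constant $c<\infty$, not depending on $N$, such that $|y_i(d)|/\pi_i(d)\le c$ for all units $i$, all exposures $d$, and all populations in the sequence; (Condition 2) for each pair $(a,b)\in\{k,l\}^2$, setting $g_{ij}=0$ if $\pi_{ij}(d_a,d_b)=\pi_i(d_a)\pi_j(d_b)$ and $g_{ij}=1$ otherwise, one has $\sum_{i=1}^N\sum_{j=1}^N g_{ij}=o(N^2)$. Then $\widehat{\tau_{HT}}(d_k,d_l)-\tau(d_k,d_l)\to 0$ in probability as $N\to\infty$, where $\widehat{\tau_{HT}}(d_k,d_l)=\frac1N\sum_{i=1}^N\Big[\frac{\mathbf{I}(D_i=d_k)y_i(d_k)}{\pi_i(d_k)}-\frac{\mathbf{I}(D_i=d_l)y_i(d_l)}{\pi_i(d_l)}\Big]$ and $\tau(d_k,d_l)=\frac1N\sum_{i=1}^N[y_i(d_k)-y_i(d_l)]$.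
   Context: For each population in the sequence: units $i=1,\dots,N$; a random treatment assignment vector $\mathbf{Z}$ with known distribution on a finite set $\Omega$; an exposure mapping $f:\Omega\times\Theta\to\Delta$ (finite set of exposures) with unit traits $\theta_i$, giving $D_i=f(\mathbf{Z},\theta_i)$; $\pi_i(d)=\Pr(D_i=d)\in(0,1)$; $\pi_{ij}(d,d')=\Pr(D_i=d,D_j=d')$ (so $\pi_{ij}(d,d)$ is the joint probability that both $i$ and $j$ receive $d$). Potential outcomes $y_i(d)$ are fixed reals and the observed outcome is $y_i(D_i)$. The design, exposure mapping and potential outcomes may change along the sequence (in the paper the sequence is formed by pooling $B$ subpopulations of sizes $n_b\ge1$ and letting $B\to\infty$). *)

theory Defs
  imports "HOL-Probability.Probability" "HOL-Library.Landau_Symbols"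
begin

text \<open>One population: assignment distribution Z (a pmf with finite support Omega),
exposure mapping f, unit traits theta; unit i (i < N) gets exposure D_i = f Z (theta i).\<close>

definition expo_prob :: "'z pmf \<Rightarrow> ('z \<Rightarrow> 't \<Rightarrow> 'd) \<Rightarrow> (nat \<Rightarrow> 't) \<Rightarrow> nat \<Rightarrow> 'd \<Rightarrow> real" where
  "expo_prob Z f \<theta> i d = measure_pmf.prob Z {z. f z (\<theta> i) = d}"

definition joint_expo_prob :: "'z pmf \<Rightarrow> ('z \<Rightarrow> 't \<Rightarrow> 'd) \<Rightarrow> (nat \<Rightarrow> 't) \<Rightarrow> nat \<Rightarrow> nat \<Rightarrow> 'd \<Rightarrow> 'd \<Rightarrow> real" where
  "joint_expo_prob Z f \<theta> i j d d' = measure_pmf.prob Z {z. f z (\<theta> i) = d \<and> f z (\<theta> j) = d'}"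

definition HT_est :: "nat \<Rightarrow> 'z pmf \<Rightarrow> ('z \<Rightarrow> 't \<Rightarrow> 'd) \<Rightarrow> (nat \<Rightarrow> 't) \<Rightarrow> (nat \<Rightarrow> 'd \<Rightarrow> real) \<Rightarrow> 'd \<Rightarrow> 'd \<Rightarrow> 'z \<Rightarrow> real" where
  "HT_est N Z f \<theta> y dk dl z = (1 / real N) * (\<Sum>i<N.
      (if f z (\<theta> i) = dk then 1 else 0) * y i dk / expo_prob Z f \<theta> i dk
    - (if f z (\<theta> i) = dl then 1 else 0) * y i dl / expo_prob Z f \<theta> i dl)"

definition avg_effect :: "nat \<Rightarrow> (nat \<Rightarrow> 'd \<Rightarrow> real) \<Rightarrow> 'd \<Rightarrow> 'd \<Rightarrow> real" where
  "avg_effect N y dk dl = (1 / real N) * (\<Sum>i<N. y i dk - y i dl)"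

definition dep_pairs :: "nat \<Rightarrow> 'z pmf \<Rightarrow> ('z \<Rightarrow> 't \<Rightarrow> 'd) \<Rightarrow> (nat \<Rightarrow> 't) \<Rightarrow> 'd \<Rightarrow> 'd \<Rightarrow> nat" where
  "dep_pairs N Z f \<theta> a b = card {(i, j). i < N \<and> j < N \<and>
      joint_expo_prob Z f \<theta> i j a b \<noteq> expo_prob Z f \<theta> i a * expo_prob Z f \<theta> j b}"

end

theory Submission
  imports Defs
begin

text \<open>Each summand of the estimation error is a centred exposure indicator weighted by
y_i(d) / pi_i(d), so the second moment of the error is 1/N^2 times a double sum of covariances.
The covariance of two such terms is the product of the weights times pi_ij(a, b) - pi_i(a) pi_j(b);
it vanishes for independent pairs and is at most c^2 otherwise. Hence the second moment is at
most c^2 times the fraction of dependent pairs, which is o(1) by condition 2, and Chebyshev's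
inequality finishes the proof.\<close>

lemma (in prob_space) expectation_centered_indicator_mult:
  assumes "A \<in> events" "B \<in> events"
  shows "expectation (\<lambda>x. (indicator A x - prob A) * (indicator B x - prob B))
       = prob (A \<inter> B) - prob A * prob B"
proof -
  have "(\<lambda>x. (indicator A x - prob A) * (indicator B x - prob B))
      = (\<lambda>x. indicator (A \<inter> B) x - prob B * indicator A x - prob A * indicator B x + prob A * prob B :: real)"
    by (auto simp: fun_eq_iff indicator_def algebra_simps)
  moreover have "integrable M (indicator C :: 'a \<Rightarrow> real)" if "C \<in> events" for C
    using that by (simp add: emeasure_eq_measure)
  ultimately show ?thesis
    using assms by (simp add: Int_absorb1 sets.sets_into_space prob_space)
qed

lemma expectation_square_sum:
  fixes X :: "'i \<Rightarrow> 'z \<Rightarrow> real"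
  assumes "finite (set_pmf Z)"
  shows "measure_pmf.expectation Z (\<lambda>z. (\<Sum>i\<in>I. X i z)\<^sup>2)
       = (\<Sum>i\<in>I. \<Sum>j\<in>I. measure_pmf.expectation Z (\<lambda>z. X i z * X j z))"
  by (simp add: power2_eq_square sum_product integrable_measure_pmf_finite[OF assms])

lemma prob_abs_gt_le_second_moment:
  fixes W :: "'z \<Rightarrow> real"
  assumes "finite (set_pmf Z)" "0 < \<epsilon>"
  shows "measure_pmf.prob Z {z. \<epsilon> < \<bar>W z\<bar>} \<le> measure_pmf.expectation Z (\<lambda>z. (W z)\<^sup>2) / \<epsilon>\<^sup>2"
proof -
  have "measure_pmf.prob Z {z. \<epsilon> < \<bar>W z\<bar>} \<le> measure_pmf.prob Z {z. \<epsilon> \<le> \<bar>W z\<bar>}"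
    by (intro measure_pmf.finite_measure_mono) auto
  also have "\<dots> \<le> measure_pmf.expectation Z (\<lambda>z. (W z)\<^sup>2) / \<epsilon>\<^sup>2"
    using measure_pmf.second_moment_method[of W Z \<epsilon>] assms
    by (simp add: integrable_measure_pmf_finite)
  finally show ?thesis .
qed

lemma real_card_pairs_eq_sum:
  fixes n :: nat
  shows "real (card {(i, j). i < n \<and> j < n \<and> P i j}) = (\<Sum>i<n. \<Sum>j<n. if P i j then 1 else 0)"
proof -
  have "{(i, j). i < n \<and> j < n \<and> P i j} = {x \<in> {..<n} \<times> {..<n}. P (fst x) (snd x)}"
    by auto
  then have "real (card {(i, j). i < n \<and> j < n \<and> P i j})
           = (\<Sum>x\<in>{x \<in> {..<n} \<times> {..<n}. P (fst x) (snd x)}. 1)"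
    by simp
  also have "\<dots> = (\<Sum>x\<in>{..<n} \<times> {..<n}. if P (fst x) (snd x) then 1 else 0)"
    by (rule sum.inter_filter) simp
  finally show ?thesis
    by (simp add: sum.cartesian_product case_prod_beta)
qed

definition HT_residual ::
    "'z pmf \<Rightarrow> ('z \<Rightarrow> 't \<Rightarrow> 'd) \<Rightarrow> (nat \<Rightarrow> 't) \<Rightarrow> (nat \<Rightarrow> 'd \<Rightarrow> real) \<Rightarrow> nat \<Rightarrow> 'd \<Rightarrow> 'z \<Rightarrow> real" where
  "HT_residual Z f \<theta> y i d z =
     (indicator {z. f z (\<theta> i) = d} z - expo_prob Z f \<theta> i d) * (y i d / expo_prob Z f \<theta> i d)"

lemma HT_est_minus_avg_effect:
  assumes "\<And>i. i < N \<Longrightarrow> expo_prob Z f \<theta> i dk \<noteq> 0" "\<And>i. i < N \<Longrightarrow> expo_prob Z f \<theta> i dl \<noteq> 0"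
  shows "HT_est N Z f \<theta> y dk dl z - avg_effect N y dk dl
       = (\<Sum>i<N. HT_residual Z f \<theta> y i dk z - HT_residual Z f \<theta> y i dl z) / real N"
proof -
  have "(if f z (\<theta> i) = dk then 1 else 0) * y i dk / expo_prob Z f \<theta> i dk
      - (if f z (\<theta> i) = dl then 1 else 0) * y i dl / expo_prob Z f \<theta> i dl - (y i dk - y i dl)
      = HT_residual Z f \<theta> y i dk z - HT_residual Z f \<theta> y i dl z" if "i < N" for i
    using assms[OF that] by (simp add: HT_residual_def field_simps)
  then have "(\<Sum>i<N. (if f z (\<theta> i) = dk then 1 else 0) * y i dk / expo_prob Z f \<theta> i dk
      - (if f z (\<theta> i) = dl then 1 else 0) * y i dl / expo_prob Z f \<theta> i dl) - (\<Sum>i<N. y i dk - y i dl)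
      = (\<Sum>i<N. HT_residual Z f \<theta> y i dk z - HT_residual Z f \<theta> y i dl z)"
    by (simp flip: sum_subtractf)
  then show ?thesis
    unfolding HT_est_def avg_effect_def by (simp flip: diff_divide_distrib)
qed

lemma expectation_HT_residual_mult:
  "measure_pmf.expectation Z (\<lambda>z. HT_residual Z f \<theta> y i a z * HT_residual Z f \<theta> y j b z)
   = y i a / expo_prob Z f \<theta> i a * (y j b / expo_prob Z f \<theta> j b)
     * (joint_expo_prob Z f \<theta> i j a b - expo_prob Z f \<theta> i a * expo_prob Z f \<theta> j b)"
proof -
  have "{z. f z (\<theta> i) = a} \<inter> {z. f z (\<theta> j) = b} = {z. f z (\<theta> i) = a \<and> f z (\<theta> j) = b}"
    by auto
  then show ?thesis
    using measure_pmf.expectation_centered_indicator_mult[of "{z. f z (\<theta> i) = a}" Z "{z. f z (\<theta> j) = b}"]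
    by (simp add: HT_residual_def expo_prob_def joint_expo_prob_def mult_ac)
qed

lemma abs_expectation_HT_residual_mult_le:
  assumes "\<bar>y i a / expo_prob Z f \<theta> i a\<bar> \<le> c" "\<bar>y j b / expo_prob Z f \<theta> j b\<bar> \<le> c"
  shows "\<bar>measure_pmf.expectation Z (\<lambda>z. HT_residual Z f \<theta> y i a z * HT_residual Z f \<theta> y j b z)\<bar>
       \<le> c\<^sup>2 * (if joint_expo_prob Z f \<theta> i j a b \<noteq> expo_prob Z f \<theta> i a * expo_prob Z f \<theta> j b
                then 1 else 0)"
proof -
  have "0 \<le> expo_prob Z f \<theta> i a * expo_prob Z f \<theta> j b" "expo_prob Z f \<theta> i a * expo_prob Z f \<theta> j b \<le> 1"
    by (simp_all add: expo_prob_def mult_le_one)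
  moreover have "0 \<le> joint_expo_prob Z f \<theta> i j a b" "joint_expo_prob Z f \<theta> i j a b \<le> 1"
    by (simp_all add: joint_expo_prob_def)
  ultimately have cov_le: "\<bar>joint_expo_prob Z f \<theta> i j a b - expo_prob Z f \<theta> i a * expo_prob Z f \<theta> j b\<bar> \<le> 1"
    by linarith
  have weights_le: "\<bar>y i a / expo_prob Z f \<theta> i a\<bar> * \<bar>y j b / expo_prob Z f \<theta> j b\<bar> \<le> c\<^sup>2"
    using mult_mono[OF assms abs_ge_zero[THEN order_trans, OF assms(1)] abs_ge_zero]
    by (simp add: power2_eq_square)
  show ?thesis
    using mult_mono[OF weights_le cov_le zero_le_power2 abs_ge_zero]
    by (simp add: expectation_HT_residual_mult abs_mult)
qed

lemma second_moment_HT_deviation_le: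
  fixes y :: "nat \<Rightarrow> 'd \<Rightarrow> real"
  assumes fin: "finite (set_pmf Z)"
    and pos: "\<And>i d. i < N \<Longrightarrow> d \<in> {dk, dl} \<Longrightarrow> 0 < expo_prob Z f \<theta> i d"
    and bounded: "\<And>i d. i < N \<Longrightarrow> d \<in> {dk, dl} \<Longrightarrow> \<bar>y i d\<bar> / expo_prob Z f \<theta> i d \<le> c"
  shows "measure_pmf.expectation Z (\<lambda>z. (HT_est N Z f \<theta> y dk dl z - avg_effect N y dk dl)\<^sup>2)
       \<le> c\<^sup>2 * ((real (dep_pairs N Z f \<theta> dk dk) + real (dep_pairs N Z f \<theta> dk dl)
                 + real (dep_pairs N Z f \<theta> dl dk) + real (dep_pairs N Z f \<theta> dl dl)) / (real N)\<^sup>2)"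
proof -
  define R where "R = HT_residual Z f \<theta> y"
  define X where "X i z = R i dk z - R i dl z" for i z
  define g where "g a b i j = (if joint_expo_prob Z f \<theta> i j a b \<noteq> expo_prob Z f \<theta> i a * expo_prob Z f \<theta> j b
                                then 1 else 0 :: real)" for a b i j
  note integrable = integrable_measure_pmf_finite[OF fin]
  have weight_le: "\<bar>y k d / expo_prob Z f \<theta> k d\<bar> \<le> c" if "k < N" "d \<in> {dk, dl}" for k d
    using bounded[OF that] pos[OF that] by (simp add: abs_divide)
  have cross_le: "measure_pmf.expectation Z (\<lambda>z. X i z * X j z)
                  \<le> c\<^sup>2 * (g dk dk i j + g dk dl i j + g dl dk i j + g dl dl i j)" if "i < N" "j < N" for i j
  proof -
    have expand: "measure_pmf.expectation Z (\<lambda>z. X i z * X j z)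
        = measure_pmf.expectation Z (\<lambda>z. R i dk z * R j dk z) - measure_pmf.expectation Z (\<lambda>z. R i dk z * R j dl z)
        - measure_pmf.expectation Z (\<lambda>z. R i dl z * R j dk z) + measure_pmf.expectation Z (\<lambda>z. R i dl z * R j dl z)"
      by (simp add: X_def algebra_simps integrable)
    have cov_le: "\<bar>measure_pmf.expectation Z (\<lambda>z. R i a z * R j b z)\<bar> \<le> c\<^sup>2 * g a b i j"
      if "a \<in> {dk, dl}" "b \<in> {dk, dl}" for a b
      using abs_expectation_HT_residual_mult_le[OF weight_le[OF \<open>i < N\<close> that(1)] weight_le[OF \<open>j < N\<close> that(2)]]
      unfolding R_def g_def .
    show ?thesis
      using expand cov_le[of dk dk] cov_le[of dk dl] cov_le[of dl dk] cov_le[of dl dl]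
      by (simp add: distrib_left abs_le_iff)
  qed
  have "measure_pmf.expectation Z (\<lambda>z. (HT_est N Z f \<theta> y dk dl z - avg_effect N y dk dl)\<^sup>2)
      = measure_pmf.expectation Z (\<lambda>z. (\<Sum>i<N. X i z)\<^sup>2) / (real N)\<^sup>2"
  proof -
    have "HT_est N Z f \<theta> y dk dl z - avg_effect N y dk dl = (\<Sum>i<N. X i z) / real N" for z
      using pos by (simp add: HT_est_minus_avg_effect X_def R_def less_imp_neq[symmetric])
    then show ?thesis
      by (simp add: power_divide)
  qed
  also have "\<dots> = (\<Sum>i<N. \<Sum>j<N. measure_pmf.expectation Z (\<lambda>z. X i z * X j z)) / (real N)\<^sup>2"
    by (simp add: expectation_square_sum[OF fin])
  also have "\<dots> \<le> (\<Sum>i<N. \<Sum>j<N. c\<^sup>2 * (g dk dk i j + g dk dl i j + g dl dk i j + g dl dl i j)) / (real N)\<^sup>2"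
    by (intro divide_right_mono sum_mono cross_le) auto
  also have "\<dots> = c\<^sup>2 * ((real (dep_pairs N Z f \<theta> dk dk) + real (dep_pairs N Z f \<theta> dk dl)
                 + real (dep_pairs N Z f \<theta> dl dk) + real (dep_pairs N Z f \<theta> dl dl)) / (real N)\<^sup>2)"
    by (simp add: dep_pairs_def real_card_pairs_eq_sum g_def sum.distrib flip: sum_distrib_left)
  finally show ?thesis .
qed

theorem mainTheorem4:
  fixes N :: "nat \<Rightarrow> nat"
    and Z :: "nat \<Rightarrow> 'z pmf"
    and \<Delta> :: "nat \<Rightarrow> 'd set"
    and f :: "nat \<Rightarrow> 'z \<Rightarrow> 't \<Rightarrow> 'd"
    and \<theta> :: "nat \<Rightarrow> nat \<Rightarrow> 't"
    and y :: "nat \<Rightarrow> nat \<Rightarrow> 'd \<Rightarrow> real"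
    and dk dl :: 'd
  assumes N_lim: "filterlim N at_top sequentially"
    and Omega_fin: "\<And>m. finite (set_pmf (Z m))"
    and Delta_fin: "\<And>m. finite (\<Delta> m)"
    and f_range: "\<And>m z i. z \<in> set_pmf (Z m) \<Longrightarrow> i < N m \<Longrightarrow> f m z (\<theta> m i) \<in> \<Delta> m"
    and dk_in: "\<And>m. dk \<in> \<Delta> m" and dl_in: "\<And>m. dl \<in> \<Delta> m"
    and pi_pos: "\<And>m i d. i < N m \<Longrightarrow> d \<in> \<Delta> m \<Longrightarrow> 0 < expo_prob (Z m) (f m) (\<theta> m) i d"
    and pi_lt1: "\<And>m i d. i < N m \<Longrightarrow> d \<in> \<Delta> m \<Longrightarrow> expo_prob (Z m) (f m) (\<theta> m) i d < 1"
    and cond1: "\<exists>c. \<forall>m i d. i < N m \<longrightarrow> d \<in> \<Delta> m \<longrightarrow>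
                   \<bar>y m i d\<bar> / expo_prob (Z m) (f m) (\<theta> m) i d \<le> c"
    and cond2: "\<And>a b. a \<in> {dk, dl} \<Longrightarrow> b \<in> {dk, dl} \<Longrightarrow>
                   (\<lambda>m. real (dep_pairs (N m) (Z m) (f m) (\<theta> m) a b)) \<in> o(\<lambda>m. (real (N m))\<^sup>2)"
  shows "\<forall>\<epsilon>>0. (\<lambda>m. measure_pmf.prob (Z m)
            {z. \<bar>HT_est (N m) (Z m) (f m) (\<theta> m) (y m) dk dl z - avg_effect (N m) (y m) dk dl\<bar> > \<epsilon>})
          \<longlonglongrightarrow> 0"
proof (intro allI impI)
  fix \<epsilon> :: real
  assume "\<epsilon> > 0"
  obtain c where c: "\<And>m i d. i < N m \<Longrightarrow> d \<in> \<Delta> m \<Longrightarrow> \<bar>y m i d\<bar> / expo_prob (Z m) (f m) (\<theta> m) i d \<le> c"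
    using cond1 by blast
  define q where "q a b m = real (dep_pairs (N m) (Z m) (f m) (\<theta> m) a b) / (real (N m))\<^sup>2" for a b m
  have "q a b \<longlonglongrightarrow> 0" if "a \<in> {dk, dl}" "b \<in> {dk, dl}" for a b
    unfolding q_def using smalloD_tendsto[OF cond2[OF that]] .
  then have "(\<lambda>m. c\<^sup>2 / \<epsilon>\<^sup>2 * (q dk dk m + q dk dl m + q dl dk m + q dl dl m)) \<longlonglongrightarrow> c\<^sup>2 / \<epsilon>\<^sup>2 * (0 + 0 + 0 + 0)"
    by (intro tendsto_mult tendsto_const tendsto_add) auto
  then have lim: "(\<lambda>m. c\<^sup>2 / \<epsilon>\<^sup>2 * (q dk dk m + q dk dl m + q dl dk m + q dl dl m)) \<longlonglongrightarrow> 0"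
    by simp
  have bound: "measure_pmf.prob (Z m)
            {z. \<bar>HT_est (N m) (Z m) (f m) (\<theta> m) (y m) dk dl z - avg_effect (N m) (y m) dk dl\<bar> > \<epsilon>}
          \<le> c\<^sup>2 / \<epsilon>\<^sup>2 * (q dk dk m + q dk dl m + q dl dk m + q dl dl m)" for m
  proof -
    have "0 < expo_prob (Z m) (f m) (\<theta> m) i d" "\<bar>y m i d\<bar> / expo_prob (Z m) (f m) (\<theta> m) i d \<le> c"
      if "i < N m" "d \<in> {dk, dl}" for i d
      using pi_pos[OF that(1)] c[OF that(1)] that(2) dk_in dl_in by auto
    note second_moment = second_moment_HT_deviation_le[OF Omega_fin this]
    show ?thesis
      using order_trans[OF prob_abs_gt_le_second_moment[OF Omega_fin \<open>\<epsilon> > 0\<close>]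
                           divide_right_mono[OF second_moment zero_le_power2]]
      by (simp add: q_def add_divide_distrib)
  qed
  show "(\<lambda>m. measure_pmf.prob (Z m)
            {z. \<bar>HT_est (N m) (Z m) (f m) (\<theta> m) (y m) dk dl z - avg_effect (N m) (y m) dk dl\<bar> > \<epsilon>})
          \<longlonglongrightarrow> 0"
    by (rule tendsto_sandwich[OF always_eventually always_eventually tendsto_const lim]) (simp, use bound in blast)
qed

end
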